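(* Let $G=(V,E)$ be a Laman-sparse graph on $n$ vertices and let $p=(p_1,\dots,p_n)$ be a generic configuration in $\mathbb{R}^2$, with $d_E=(\|p_i-p_j\|^2)_{ij\in E}$. Then the EDM completion system $\{X\in\mathcal{S}^n_+:\Pi_E(K(X))=d_E,\ Xe=0\}$ has singularity degree $0$; equivalently, $(G,p)$ has no nonzero positive semidefinite equilibrium stress matrix, and there is a feasible $X$ with $X\succeq0$, $Xe=0$, $\operatorname{rank}X=n-1$, i.e., a configuration $\bar p$ with affine span of dimension $n-1$ satisfying $\|\bar p_i-\bar p_j\|^2=d_{ij}$ for all $ij\in E$.
   Context: Laman-sparse: every subgraph with $k\ge 2$ vertices has at most $2k-3$ edges. Generic: coordinates satisfy no nonzero polynomial with rational coefficients. $\mathcal{S}^n_+$ is the cone of $n\times n$ positive semidefinite matrices, $e$ the all-ones vector, $K:\mathcal{S}^n\to\mathcal{S}^n$ the map $K(X)_{ij}=X_{ii}+X_{jj}-2X_{ij}$, and $\Pi_E$ the projection onto the entries indexed by $E$. The singularity degree of the system $\{X\in\mathcal{S}^n_+ : \Pi_E(K(X))=d_E,\ Xe=0\}$ is the minimum number of facial reduction steps ${\mathcal F}_0=\mathcal{S}^n_+$, ${\mathcal F}_{i+1}={\mathcal F}_i\cap Z_i^\perp$, with $Z_i={\mathcal M}^*v_i\in{\mathcal F}_i^*\setminus{\mathcal F}_i^\perp$ and $v_i$ orthogonal to the right-hand side, where ${\mathcal M}$ is the linear constraint map, needed to reach the smallest face of $\mathcal{S}^n_+$ containing the feasible set (degree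 $0$ meaning the feasible set meets the relative interior of the face $\{X\succeq 0: Xe=0\}$). Equivalently it is the singularity degree of the face of $\Pi_E(K(\{X\in\mathcal S^n_+: Xe=0\}))$ generated by $d_E$. An equilibrium stress of $(G,p)$ is $\omega:E\to\mathbb{R}$ with $\sum_{j:ij\in E}\omega_{ij}(p_i-p_j)=0$ for all $i$; its stress matrix $\Omega$ has off-diagonal entries $-\omega_{ij}$ ($0$ off $E$) and diagonal entries $\sum_j\omega_{ij}$. *)

theory Defs
  imports "HOL-Analysis.Analysis"
begin

text \<open>Vertices are the elements of a finite type 'v, so n = CARD('v).
  A graph is given by its edge set E, a set of 2-element vertex sets.
  A configuration in the plane is p :: 'v \<Rightarrow> real^2.\<close>

definition simple_graph :: "'v set set \<Rightarrow> bool" where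
  "simple_graph E \<longleftrightarrow> (\<forall>e\<in>E. card e = 2)"

definition laman_sparse :: "'v set set \<Rightarrow> bool" where
  "laman_sparse E \<longleftrightarrow>
     (\<forall>S. finite S \<and> card S \<ge> 2 \<longrightarrow> int (card {e\<in>E. e \<subseteq> S}) \<le> 2 * int (card S) - 3)"

text \<open>A polynomial is written as a finite sum over a finite set M of
  exponent vectors m (monomial \<prod>_i \<prod>_k (p i $ k)^(m i k)) with rational coefficients c m.\<close>
definition generic :: "('v::finite \<Rightarrow> real^2) \<Rightarrow> bool" where
  "generic p \<longleftrightarrow>
     (\<forall>(M :: ('v \<Rightarrow> 2 \<Rightarrow> nat) set) (c :: ('v \<Rightarrow> 2 \<Rightarrow> nat) \<Rightarrow> rat).
        finite M \<longrightarrow>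
        (\<Sum>m\<in>M. of_rat (c m) * (\<Prod>i\<in>UNIV. \<Prod>k\<in>UNIV. (p i $ k) ^ (m i k))) = 0 \<longrightarrow>
        (\<forall>m\<in>M. c m = 0))"

definition psd :: "real^'n::finite^'n \<Rightarrow> bool" where
  "psd A \<longleftrightarrow> transpose A = A \<and> (\<forall>x. 0 \<le> x \<bullet> (A *v x))"

definition Kmap :: "real^'n::finite^'n \<Rightarrow> 'n \<Rightarrow> 'n \<Rightarrow> real" where
  "Kmap X i j = X $ i $ i + X $ j $ j - 2 * X $ i $ j"

definition centred_face :: "(real^'n::finite^'n) set" where
  "centred_face = {X. psd X \<and> X *v (vec 1) = 0}"

definition edm_feasible :: "'n::finite set set \<Rightarrow> ('n \<Rightarrow> real^2) \<Rightarrow> (real^'n^'n) set" where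
  "edm_feasible E p =
     {X. X \<in> centred_face \<and>
         (\<forall>i j. {i, j} \<in> E \<longrightarrow> Kmap X i j = (norm (p i - p j))^2)}"

text \<open>Singularity degree 0: the feasible set meets the relative interior of
  the face {X \<succeq> 0 : Xe = 0}.\<close>
definition sing_degree_zero :: "'n::finite set set \<Rightarrow> ('n \<Rightarrow> real^2) \<Rightarrow> bool" where
  "sing_degree_zero E p \<longleftrightarrow> edm_feasible E p \<inter> rel_interior centred_face \<noteq> {}"

text \<open>Equilibrium stress \<omega> : E \<rightarrow> \<real> (represented as a function on vertex pairs,
  only its values on E matter).\<close>
definition equilibrium_stress :: "'n::finite set set \<Rightarrow> ('n \<Rightarrow> real^2) \<Rightarrow> ('n set \<Rightarrow> real) \<Rightarrow> bool" where
  "equilibrium_stress E p \<omega> \<longleftrightarrow>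
     (\<forall>i. (\<Sum>j\<in>{j. {i, j} \<in> E}. \<omega> {i, j} *\<^sub>R (p i - p j)) = 0)"

definition stress_matrix :: "'n::finite set set \<Rightarrow> ('n set \<Rightarrow> real) \<Rightarrow> real^'n^'n" where
  "stress_matrix E \<omega> =
     (\<chi> i j. if i = j then (\<Sum>k\<in>{k. {i, k} \<in> E}. \<omega> {i, k})
             else if {i, j} \<in> E then - \<omega> {i, j} else 0)"

end

theory Submission
  imports Defs
begin

text \<open>By induction along a Henneberg construction, a Laman-sparse graph at a generic planar
  configuration p has linearly independent rigidity matrix rows. A vertex v of degree at most
  three exists; removing it (and, for degree three, adding an edge between two of its neighbours,
  chosen by a tight-set argument) leaves a smaller Laman-sparse graph, and independence lifts back
  at a special placement of v. It transfers to the generic p because it is witnessed by a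
  nonvanishing Gram determinant, a polynomial with rational coefficients in the coordinates.

  Independence excludes nonzero equilibrium stresses and makes the rigidity matrix surjective,
  giving an infinitesimal motion q with (p i - p j) \<bullet> (q i - q j) = -1 on all edges. With P and
  Q the centred p and q, the matrix X = Gram(P + t Q) - t^2 Gram(Q) + t (I - J/n) satisfies
  K(X) i j = \<parallel>p i - p j\<parallel>^2 on the edges, and for small t > 0 it is positive definite on the
  orthogonal complement of e. Hence rank X = n - 1 and X lies in the relative interior of the
  face {X \<succeq> 0 : Xe = 0}.\<close>

section \<open>Rational polynomials in the coordinates\<close>

definition monomial :: "('v::finite \<Rightarrow> 2 \<Rightarrow> nat) \<Rightarrow> ('v \<Rightarrow> real^2) \<Rightarrow> real" where
  "monomial m p = (\<Prod>i\<in>UNIV. \<Prod>k\<in>UNIV. (p i $ k) ^ m i k)"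

definition has_rat_expansion :: "(('v::finite \<Rightarrow> real^2) \<Rightarrow> real) \<Rightarrow> bool" where
  "has_rat_expansion f \<longleftrightarrow>
     (\<exists>M c. finite M \<and> (\<forall>p. f p = (\<Sum>m\<in>M. of_rat (c m) * monomial m p)))"

inductive rat_polynomial :: "(('v::finite \<Rightarrow> real^2) \<Rightarrow> real) \<Rightarrow> bool" where
  const: "rat_polynomial (\<lambda>p. of_rat r)"
| coord: "rat_polynomial (\<lambda>p. p i $ k)"
| add: "rat_polynomial f \<Longrightarrow> rat_polynomial g \<Longrightarrow> rat_polynomial (\<lambda>p. f p + g p)"
| mult: "rat_polynomial f \<Longrightarrow> rat_polynomial g \<Longrightarrow> rat_polynomial (\<lambda>p. f p * g p)"

lemma monomial_add: "monomial (\<lambda>i k. m i k + m' i k) p = monomial m p * monomial m' p"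
  unfolding monomial_def by (simp add: power_add prod.distrib)

lemma has_rat_expansion_const: "has_rat_expansion (\<lambda>p. of_rat r)"
  unfolding has_rat_expansion_def
  by (intro exI[of _ "{\<lambda>i k. 0}"] exI[of _ "\<lambda>_. r"]) (simp add: monomial_def)

lemma has_rat_expansion_coord: "has_rat_expansion (\<lambda>p. p i $ k)"
proof -
  define m where "m = (\<lambda>j l. if j = i \<and> l = k then 1 else (0::nat))"
  have "monomial m p = p i $ k" for p
  proof -
    have "(p j $ l) ^ m j l = (if j = i then if l = k then p j $ l else 1 else 1)" for j l
      unfolding m_def by simp
    then have "monomial m p = (\<Prod>j\<in>UNIV. \<Prod>l\<in>UNIV. if j = i then if l = k then p j $ l else 1 else 1)"
      unfolding monomial_def by presburger
    also have "\<dots> = (\<Prod>j\<in>UNIV. if j = i then \<Prod>l\<in>UNIV. if l = k then p j $ l else 1 else 1)"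
      by (intro prod.cong) simp_all
    finally show ?thesis by (simp add: prod.delta)
  qed
  then show ?thesis
    unfolding has_rat_expansion_def by (intro exI[of _ "{m}"] exI[of _ "\<lambda>_. 1"]) simp
qed

lemma has_rat_expansion_add:
  assumes "has_rat_expansion f" "has_rat_expansion g"
  shows "has_rat_expansion (\<lambda>p. f p + g p)"
proof -
  obtain M c where M: "finite M" and f: "\<And>p. f p = (\<Sum>m\<in>M. of_rat (c m) * monomial m p)"
    using assms(1) unfolding has_rat_expansion_def by blast
  obtain M' c' where M': "finite M'" and g: "\<And>p. g p = (\<Sum>m\<in>M'. of_rat (c' m) * monomial m p)"
    using assms(2) unfolding has_rat_expansion_def by blast
  define d where "d m = (if m \<in> M then c m else 0) + (if m \<in> M' then c' m else 0)" for m
  have "(\<Sum>m\<in>M \<union> M'. of_rat (d m) * monomial m p)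
      = (\<Sum>m\<in>M \<union> M'. if m \<in> M then of_rat (c m) * monomial m p else 0)
      + (\<Sum>m\<in>M \<union> M'. if m \<in> M' then of_rat (c' m) * monomial m p else 0)" for p
    unfolding d_def sum.distrib[symmetric] by (intro sum.cong) (auto simp: of_rat_add distrib_right)
  also have "\<dots> p = f p + g p" for p
    using M M' unfolding f g by (simp add: sum.If_cases Int_absorb1 Int_absorb2)
  finally show ?thesis
    unfolding has_rat_expansion_def using M M' by (intro exI[of _ "M \<union> M'"] exI[of _ d]) simp
qed

lemma has_rat_expansion_mult:
  assumes "has_rat_expansion f" "has_rat_expansion g"
  shows "has_rat_expansion (\<lambda>p. f p * g p)"
proof -
  obtain M c where M: "finite M" and f: "\<And>p. f p = (\<Sum>m\<in>M. of_rat (c m) * monomial m p)"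
    using assms(1) unfolding has_rat_expansion_def by blast
  obtain M' c' where M': "finite M'" and g: "\<And>p. g p = (\<Sum>m\<in>M'. of_rat (c' m) * monomial m p)"
    using assms(2) unfolding has_rat_expansion_def by blast
  define h where "h x = (\<lambda>i k. fst x i k + snd x i k)" for x :: "('a \<Rightarrow> 2 \<Rightarrow> nat) \<times> ('a \<Rightarrow> 2 \<Rightarrow> nat)"
  define d where "d m = (\<Sum>x\<in>{x\<in>M \<times> M'. h x = m}. c (fst x) * c' (snd x))" for m
  have fin: "finite (M \<times> M')" using M M' by simp
  have "f p * g p = (\<Sum>x\<in>M \<times> M'. of_rat (c (fst x) * c' (snd x)) * monomial (h x) p)" for p
    unfolding f g sum_product sum.cartesian_product h_def
    by (intro sum.cong) (auto simp: monomial_add of_rat_mult)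
  also have "\<dots> p = (\<Sum>m\<in>h ` (M \<times> M'). \<Sum>x\<in>{x\<in>M \<times> M'. h x = m}.
      of_rat (c (fst x) * c' (snd x)) * monomial (h x) p)" for p
    by (rule sum.image_gen[OF fin])
  also have "\<dots> p = (\<Sum>m\<in>h ` (M \<times> M'). of_rat (d m) * monomial m p)" for p
    unfolding d_def of_rat_sum sum_distrib_right by (intro sum.cong) auto
  finally show ?thesis
    unfolding has_rat_expansion_def using fin by (intro exI[of _ "h ` (M \<times> M')"] exI[of _ d]) simp
qed

lemma rat_polynomial_expansion: "rat_polynomial f \<Longrightarrow> has_rat_expansion f"
  by (induction rule: rat_polynomial.induct)
    (simp_all add: has_rat_expansion_const has_rat_expansion_coord
      has_rat_expansion_add has_rat_expansion_mult)

lemma generic_rat_polynomial_nonzero: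
  assumes "generic p" "rat_polynomial f" "f q \<noteq> 0"
  shows "f p \<noteq> 0"
proof
  assume "f p = 0"
  obtain M c where M: "finite M" and f: "\<And>p. f p = (\<Sum>m\<in>M. of_rat (c m) * monomial m p)"
    using rat_polynomial_expansion[OF assms(2)] unfolding has_rat_expansion_def by blast
  have "\<forall>m\<in>M. c m = 0"
    using assms(1) M \<open>f p = 0\<close> unfolding generic_def f monomial_def by blast
  then show False using assms(3) by (simp add: f)
qed

lemma rat_polynomial_of_int: "rat_polynomial (\<lambda>p. of_int z)"
  using rat_polynomial.const[of "of_int z"] by simp

lemma rat_polynomial_0: "rat_polynomial (\<lambda>p. 0)"
  using rat_polynomial_of_int[of 0] by simp

lemma rat_polynomial_1: "rat_polynomial (\<lambda>p. 1)"
  using rat_polynomial_of_int[of 1] by simp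

lemma rat_polynomial_diff:
  assumes "rat_polynomial f" "rat_polynomial g"
  shows "rat_polynomial (\<lambda>p. f p - g p)"
  using rat_polynomial.add[OF assms(1) rat_polynomial.mult[OF rat_polynomial.const[of "-1"] assms(2)]]
  by simp

lemma rat_polynomial_sum:
  "(\<And>i. i \<in> I \<Longrightarrow> rat_polynomial (f i)) \<Longrightarrow> rat_polynomial (\<lambda>p. \<Sum>i\<in>I. f i p)"
  by (induction I rule: infinite_finite_induct) (auto intro: rat_polynomial.add rat_polynomial_0)

lemma rat_polynomial_prod:
  "(\<And>i. i \<in> I \<Longrightarrow> rat_polynomial (f i)) \<Longrightarrow> rat_polynomial (\<lambda>p. \<Prod>i\<in>I. f i p)"
  by (induction I rule: infinite_finite_induct) (auto intro: rat_polynomial.mult rat_polynomial_1)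

lemma rat_polynomial_if:
  "rat_polynomial f \<Longrightarrow> rat_polynomial g \<Longrightarrow> rat_polynomial (\<lambda>p. if P then f p else g p)"
  by (cases P) auto

lemma simple_graph_edge_distinct: "simple_graph E \<Longrightarrow> {a, b} \<in> E \<Longrightarrow> a \<noteq> b"
  unfolding simple_graph_def by fastforce

lemma simple_graph_incident_edge:
  assumes "simple_graph E" "e \<in> E" "v \<in> e"
  obtains w where "w \<noteq> v" "e = {v, w}"
proof -
  obtain a b where "e = {a, b}" "a \<noteq> b"
    using assms(1,2) unfolding simple_graph_def by (meson card_2_iff)
  with assms(3) that[of b] that[of a] show ?thesis by (auto simp: insert_commute)
qed

lemma simple_graph_no_edge_in_singleton:
  assumes "simple_graph E"
  shows "{e\<in>E. e \<subseteq> {w}} = {}"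
proof (rule ccontr)
  assume "{e\<in>E. e \<subseteq> {w}} \<noteq> {}"
  then obtain e where "e \<in> E" "e \<subseteq> {w}" by blast
  then have "card e \<le> 1" "card e = 2"
    using assms card_mono[of "{w}" e] unfolding simple_graph_def by auto
  then show False by simp
qed

lemma simple_graph_subset: "simple_graph E \<Longrightarrow> F \<subseteq> E \<Longrightarrow> simple_graph F"
  unfolding simple_graph_def by blast

lemma inj_on_doubleton: "inj_on (\<lambda>w. {v, w}) A"
  by (rule inj_onI) (auto simp: doubleton_eq_iff)

definition neighbours :: "'v set set \<Rightarrow> 'v \<Rightarrow> 'v set" where
  "neighbours E v = {w. {v, w} \<in> E}"

definition delete_vertex :: "'v set set \<Rightarrow> 'v \<Rightarrow> 'v set set" where
  "delete_vertex E v = {e\<in>E. v \<notin> e}"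

lemma incident_edges_neighbours:
  assumes "simple_graph E"
  shows "{e\<in>E. v \<in> e} = (\<lambda>w. {v, w}) ` neighbours E v"
proof (intro equalityI subsetI)
  fix e assume "e \<in> {e\<in>E. v \<in> e}"
  then have "e \<in> E" "v \<in> e" by simp_all
  then obtain w where "w \<noteq> v" "e = {v, w}" by (rule simple_graph_incident_edge[OF assms])
  with \<open>e \<in> E\<close> have "w \<in> neighbours E v" by (simp add: neighbours_def)
  then show "e \<in> (\<lambda>w. {v, w}) ` neighbours E v" using \<open>e = {v, w}\<close> by (rule rev_image_eqI)
qed (auto simp: neighbours_def)

lemma simple_graph_split_vertex:
  assumes "simple_graph E"
  shows "E = delete_vertex E v \<union> (\<lambda>w. {v, w}) ` neighbours E v"
proof -
  have "E = delete_vertex E v \<union> {e\<in>E. v \<in> e}" by (auto simp: delete_vertex_def)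
  then show ?thesis unfolding incident_edges_neighbours[OF assms] .
qed

lemma card_neighbours:
  assumes "simple_graph E"
  shows "card (neighbours E v) = card {e\<in>E. v \<in> e}"
  unfolding incident_edges_neighbours[OF assms] by (simp add: card_image inj_on_doubleton)

lemma not_self_neighbour:
  assumes "simple_graph E"
  shows "v \<notin> neighbours E v"
proof
  assume "v \<in> neighbours E v"
  then have "{v, v} \<in> E" by (simp add: neighbours_def)
  then have "v \<noteq> v" by (rule simple_graph_edge_distinct[OF assms])
  then show False by simp
qed

lemma card_split_vertex:
  fixes E :: "'v::finite set set"
  assumes "simple_graph E"
  shows "card E = card (delete_vertex E v) + card (neighbours E v)"
proof -
  have "E = delete_vertex E v \<union> {e\<in>E. v \<in> e}" "delete_vertex E v \<inter> {e\<in>E. v \<in> e} = {}"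
    by (auto simp: delete_vertex_def)
  then show ?thesis using card_neighbours[OF assms, of v] card_Un_disjoint by (metis finite)
qed

lemma simple_graph_delete_vertex: "simple_graph E \<Longrightarrow> simple_graph (delete_vertex E v)"
  by (rule simple_graph_subset) (auto simp: delete_vertex_def)

section \<open>The rigidity matrix\<close>

text \<open>Block v of row e of the rigidity matrix, p v - p w for e = {v, w}; summing over e - {v}
  avoids choosing an orientation of e.\<close>

definition rigidity_entry :: "('v \<Rightarrow> real^2) \<Rightarrow> 'v set \<Rightarrow> 'v \<Rightarrow> real^2" where
  "rigidity_entry p e v = (if v \<in> e then (\<Sum>w\<in>e - {v}. p v - p w) else 0)"

definition stress_force :: "'v set set \<Rightarrow> ('v \<Rightarrow> real^2) \<Rightarrow> ('v set \<Rightarrow> real) \<Rightarrow> 'v \<Rightarrow> real^2" where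
  "stress_force E p \<omega> v = (\<Sum>e\<in>E. \<omega> e *\<^sub>R rigidity_entry p e v)"

definition independent_framework :: "'v set set \<Rightarrow> ('v \<Rightarrow> real^2) \<Rightarrow> bool" where
  "independent_framework E p \<longleftrightarrow> (\<forall>\<omega>. (\<forall>v. stress_force E p \<omega> v = 0) \<longrightarrow> (\<forall>e\<in>E. \<omega> e = 0))"

lemma rigidity_entry_edge: "a \<noteq> b \<Longrightarrow> rigidity_entry p {a, b} a = p a - p b"
  by (simp add: rigidity_entry_def insert_Diff_if)

lemma rigidity_entry_edge': "a \<noteq> b \<Longrightarrow> rigidity_entry p {a, b} b = p b - p a"
  using rigidity_entry_edge[of b a] by (simp add: insert_commute)

lemma rigidity_entry_outside: "v \<notin> e \<Longrightarrow> rigidity_entry p e v = 0"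
  by (simp add: rigidity_entry_def)

lemma rigidity_entry_inner:
  fixes p h :: "'v::finite \<Rightarrow> real^2"
  assumes "a \<noteq> b"
  shows "(\<Sum>v\<in>UNIV. rigidity_entry p {a, b} v \<bullet> h v) = (p a - p b) \<bullet> (h a - h b)"
proof -
  have "(\<Sum>v\<in>UNIV. rigidity_entry p {a, b} v \<bullet> h v) = (\<Sum>v\<in>{a, b}. rigidity_entry p {a, b} v \<bullet> h v)"
    by (rule sum.mono_neutral_right) (auto simp: rigidity_entry_outside)
  also have "\<dots> = (p a - p b) \<bullet> h a + (p b - p a) \<bullet> h b"
    using assms by (simp add: rigidity_entry_edge rigidity_entry_edge')
  also have "\<dots> = (p a - p b) \<bullet> (h a - h b)"
    by (simp add: inner_diff_left inner_diff_right algebra_simps)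
  finally show ?thesis .
qed

lemma stress_force_Un:
  "finite E \<Longrightarrow> finite F \<Longrightarrow> E \<inter> F = {} \<Longrightarrow> stress_force (E \<union> F) p \<omega> v = stress_force E p \<omega> v + stress_force F p \<omega> v"
  unfolding stress_force_def by (rule sum.union_disjoint)

lemma stress_force_avoiding: "\<forall>e\<in>E. v \<notin> e \<Longrightarrow> stress_force E p \<omega> v = 0"
  unfolding stress_force_def by (simp add: rigidity_entry_outside)

lemma stress_force_star:
  "stress_force ((\<lambda>w. {v, w}) ` N) p \<omega> i = (\<Sum>w\<in>N. \<omega> {v, w} *\<^sub>R rigidity_entry p {v, w} i)"
  unfolding stress_force_def by (simp add: sum.reindex inj_on_doubleton)

lemma stress_force_star_centre:
  assumes "v \<notin> N"
  shows "stress_force ((\<lambda>w. {v, w}) ` N) p \<omega> v = (\<Sum>w\<in>N. \<omega> {v, w} *\<^sub>R (p v - p w))"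
proof -
  have "rigidity_entry p {v, w} v = p v - p w" if "w \<in> N" for w
    using assms that by (intro rigidity_entry_edge) auto
  then show ?thesis unfolding stress_force_star by (intro sum.cong) simp_all
qed

lemma equilibrium_stress_iff_stress_force:
  fixes E :: "'v::finite set set"
  assumes "simple_graph E"
  shows "equilibrium_stress E p \<omega> \<longleftrightarrow> (\<forall>v. stress_force E p \<omega> v = 0)"
proof -
  have "stress_force E p \<omega> v = stress_force ((\<lambda>w. {v, w}) ` neighbours E v) p \<omega> v" for v
    unfolding incident_edges_neighbours[OF assms, symmetric] stress_force_def
    by (rule sum.mono_neutral_right) (auto simp: rigidity_entry_outside)
  then show ?thesis
    unfolding equilibrium_stress_def stress_force_star_centre[OF not_self_neighbour[OF assms]]
    by (simp add: neighbours_def)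
qed

text \<open>The Gram matrix of the rows of the rigidity matrix, padded with the identity outside E
  to a square matrix indexed by all of 'v set.\<close>

definition rigidity_gram :: "'v::finite set set \<Rightarrow> ('v \<Rightarrow> real^2) \<Rightarrow> real^('v set)^('v set)" where
  "rigidity_gram E p = (\<chi> e f. if e \<in> E \<and> f \<in> E
     then (\<Sum>v\<in>UNIV. rigidity_entry p e v \<bullet> rigidity_entry p f v) else if e = f then 1 else 0)"

lemma rigidity_gram_mult:
  fixes E :: "'v::finite set set"
  shows "(rigidity_gram E p *v x) $ e =
    (if e \<in> E then (\<Sum>v\<in>UNIV. rigidity_entry p e v \<bullet> stress_force E p (($) x) v) else x $ e)"
proof (cases "e \<in> E")
  case True
  have "(rigidity_gram E p *v x) $ e
      = (\<Sum>f\<in>UNIV. (if f \<in> E then \<Sum>v\<in>UNIV. rigidity_entry p e v \<bullet> rigidity_entry p f v else 0) * x $ f)"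
    unfolding matrix_vector_mult_def rigidity_gram_def using True by (auto intro: sum.cong)
  also have "\<dots> = (\<Sum>f\<in>E. \<Sum>v\<in>UNIV. x $ f * (rigidity_entry p e v \<bullet> rigidity_entry p f v))"
    by (subst sum.mono_neutral_cong_right[of UNIV E]) (auto simp: sum_distrib_left mult.commute)
  also have "\<dots> = (\<Sum>v\<in>UNIV. rigidity_entry p e v \<bullet> stress_force E p (($) x) v)"
    unfolding stress_force_def inner_sum_right by (subst sum.swap) simp
  finally show ?thesis using True by simp
next
  case False
  then have "(rigidity_gram E p *v x) $ e = (\<Sum>f\<in>UNIV. if e = f then x $ f else 0)"
    unfolding matrix_vector_mult_def rigidity_gram_def vec_lambda_beta by (intro sum.cong) auto
  then show ?thesis using False by simp
qed

lemma rigidity_gram_quadratic_form: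
  fixes E :: "'v::finite set set"
  shows "(\<Sum>e\<in>E. x $ e * (rigidity_gram E p *v x) $ e) = (\<Sum>v\<in>UNIV. norm (stress_force E p (($) x) v)^2)"
proof -
  have "(\<Sum>e\<in>E. x $ e * (rigidity_gram E p *v x) $ e)
      = (\<Sum>e\<in>E. \<Sum>v\<in>UNIV. (x $ e *\<^sub>R rigidity_entry p e v) \<bullet> stress_force E p (($) x) v)"
    by (intro sum.cong) (simp_all add: rigidity_gram_mult sum_distrib_left)
  also have "\<dots> = (\<Sum>v\<in>UNIV. stress_force E p (($) x) v \<bullet> stress_force E p (($) x) v)"
    by (subst sum.swap) (simp only: inner_sum_left[symmetric] stress_force_def[symmetric])
  finally show ?thesis by (simp add: power2_norm_eq_inner)
qed

lemma independent_framework_iff_det_rigidity_gram: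
  fixes E :: "'v::finite set set"
  shows "independent_framework E p \<longleftrightarrow> det (rigidity_gram E p) \<noteq> 0"
proof -
  let ?G = "rigidity_gram E p"
  have det_iff: "det ?G \<noteq> 0 \<longleftrightarrow> (\<forall>x. ?G *v x = 0 \<longrightarrow> x = 0)"
    by (metis invertible_det_nz invertible_left_inverse matrix_left_invertible_injective
        linear_injective_0 matrix_vector_mul_linear)
  show ?thesis
  proof
    assume indep: "independent_framework E p"
    have "x = 0" if Gx: "?G *v x = 0" for x
    proof -
      have outside: "x $ e = 0" if "e \<notin> E" for e
        using Gx[THEN arg_cong[where f="\<lambda>y. y $ e"]] that by (simp add: rigidity_gram_mult)
      have "(\<Sum>v\<in>UNIV. norm (stress_force E p (($) x) v)^2) = 0"
        using rigidity_gram_quadratic_form[where x=x and E=E and p=p] Gx by simp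
      then have "\<forall>v. stress_force E p (($) x) v = 0"
        by (subst (asm) sum_nonneg_eq_0_iff) auto
      then have "\<forall>e\<in>E. x $ e = 0" using indep unfolding independent_framework_def by blast
      then show "x = 0" using outside by (auto simp: vec_eq_iff)
    qed
    then show "det ?G \<noteq> 0" using det_iff by blast
  next
    assume "det ?G \<noteq> 0"
    show "independent_framework E p" unfolding independent_framework_def
    proof (intro allI impI ballI)
      fix \<omega> e assume stress: "\<forall>v. stress_force E p \<omega> v = 0" and "e \<in> E"
      define x where "x = (\<chi> f. if f \<in> E then \<omega> f else 0)"
      have "stress_force E p (($) x) = stress_force E p \<omega>"
        unfolding stress_force_def x_def by (auto intro!: sum.cong)
      also have "\<dots> = (\<lambda>_. 0)" using stress by auto
      finally have "?G *v x = 0"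
        by (simp add: vec_eq_iff rigidity_gram_mult) (simp add: x_def)
      then have "x = 0" using \<open>det ?G \<noteq> 0\<close> det_iff by blast
      then show "\<omega> e = 0" using \<open>e \<in> E\<close> by (simp add: x_def vec_eq_iff split: if_splits)
    qed
  qed
qed

lemma rat_polynomial_det_rigidity_gram:
  fixes E :: "'v::finite set set"
  shows "rat_polynomial (\<lambda>p. det (rigidity_gram E p))"
proof -
  have "rigidity_entry p e v $ k = (if v \<in> e then \<Sum>w\<in>e - {v}. p v $ k - p w $ k else 0)"
    for p :: "'v \<Rightarrow> real^2" and e v k
    by (simp add: rigidity_entry_def)
  then have "rat_polynomial (\<lambda>p::'v \<Rightarrow> real^2. rigidity_entry p e v $ k)" for e v k
    by (auto intro!: rat_polynomial_if rat_polynomial_sum rat_polynomial_diff rat_polynomial.intros rat_polynomial_0)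
  then have "rat_polynomial (\<lambda>p. rigidity_gram E p $ e $ f)" for e f
    unfolding rigidity_gram_def inner_vec_def inner_real_def
    by (auto intro!: rat_polynomial_if rat_polynomial_sum rat_polynomial.mult rat_polynomial_0 rat_polynomial_1)
  then show ?thesis
    unfolding det_def
    by (intro rat_polynomial_sum rat_polynomial.mult rat_polynomial_prod rat_polynomial_of_int)
qed

lemma independent_framework_generic:
  fixes E :: "'v::finite set set"
  assumes "generic p" "independent_framework E q"
  shows "independent_framework E p"
  using generic_rat_polynomial_nonzero[OF assms(1) rat_polynomial_det_rigidity_gram, of E q] assms(2)
  by (simp add: independent_framework_iff_det_rigidity_gram)

lemma independent_framework_solvable:
  fixes E :: "'v::finite set set"
  assumes "independent_framework E p"
  obtains h where "\<And>e. e \<in> E \<Longrightarrow> (\<Sum>v\<in>UNIV. rigidity_entry p e v \<bullet> h v) = b e"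
proof -
  have "surj ((*v) (rigidity_gram E p))"
    using assms invertible_det_nz invertible_right_inverse matrix_right_invertible_surjective
    by (metis independent_framework_iff_det_rigidity_gram)
  then obtain x where x: "rigidity_gram E p *v x = (\<chi> e. b e)" by (metis surjD)
  show ?thesis
  proof
    fix e assume "e \<in> E"
    then show "(\<Sum>v\<in>UNIV. rigidity_entry p e v \<bullet> stress_force E p (($) x) v) = b e"
      using x[THEN arg_cong[where f="\<lambda>y. y $ e"]] by (simp add: rigidity_gram_mult)
  qed
qed

lemma independent_framework_no_stress:
  fixes E :: "'v::finite set set"
  assumes "simple_graph E" "independent_framework E p" "equilibrium_stress E p \<omega>"
  shows "stress_matrix E \<omega> = 0"
proof -
  have "\<forall>e\<in>E. \<omega> e = 0"
    using assms unfolding equilibrium_stress_iff_stress_force[OF assms(1)] independent_framework_def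
    by blast
  then show ?thesis by (simp add: stress_matrix_def vec_eq_iff)
qed

section \<open>Laman-sparse graphs\<close>

definition edge_count :: "'v set set \<Rightarrow> 'v set \<Rightarrow> nat" where
  "edge_count E S = card {e\<in>E. e \<subseteq> S}"

definition tight :: "'v set set \<Rightarrow> 'v set \<Rightarrow> bool" where
  "tight E S \<longleftrightarrow> card S \<ge> 2 \<and> int (edge_count E S) = 2 * int (card S) - 3"

lemma laman_sparse_edge_count:
  "laman_sparse E \<Longrightarrow> finite S \<Longrightarrow> card S \<ge> 2 \<Longrightarrow> int (edge_count E S) \<le> 2 * int (card S) - 3"
  unfolding laman_sparse_def edge_count_def by blast

lemma not_laman_sparse:
  "\<not> laman_sparse E \<Longrightarrow> \<exists>S. finite S \<and> card S \<ge> 2 \<and> int (edge_count E S) > 2 * int (card S) - 3"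
  unfolding laman_sparse_def edge_count_def by force

lemma laman_sparse_subset:
  assumes "laman_sparse E" "F \<subseteq> E"
  shows "laman_sparse F"
  unfolding laman_sparse_def
proof (intro allI impI)
  fix S :: "'a set" assume S: "finite S \<and> 2 \<le> card S"
  have "card {e\<in>F. e \<subseteq> S} \<le> card {e\<in>E. e \<subseteq> S}"
  proof (rule card_mono)
    show "finite {e\<in>E. e \<subseteq> S}"
      using S finite_subset[of "{e\<in>E. e \<subseteq> S}" "Pow S"] by auto
  qed (use assms(2) in auto)
  with laman_sparse_edge_count[OF assms(1)] S show "int (card {e\<in>F. e \<subseteq> S}) \<le> 2 * int (card S) - 3"
    unfolding edge_count_def by force
qed

lemma laman_sparse_delete_vertex: "laman_sparse E \<Longrightarrow> laman_sparse (delete_vertex E v)"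
  by (rule laman_sparse_subset) (auto simp: delete_vertex_def)

lemma sum_degree:
  fixes E :: "'v::finite set set"
  shows "(\<Sum>v\<in>W. card {e\<in>E. v \<in> e}) = (\<Sum>e\<in>E. card (e \<inter> W))"
proof -
  have "(\<Sum>v\<in>W. card {e\<in>E. v \<in> e}) = (\<Sum>v\<in>W. \<Sum>e\<in>E. if v \<in> e then 1 else 0)"
    by (intro sum.cong) (simp_all add: sum.If_cases Int_def)
  also have "\<dots> = (\<Sum>e\<in>E. \<Sum>v\<in>W. if v \<in> e then 1 else 0)"
    by (rule sum.swap)
  also have "\<dots> = (\<Sum>e\<in>E. card (e \<inter> W))"
    by (intro sum.cong) (simp_all add: sum.If_cases Int_def conj_commute)
  finally show ?thesis .
qed

text \<open>Handshake: a vertex of degree at least 4 everywhere would give 2|E| \<ge> 4|V(E)|,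
  against |E| \<le> 2|V(E)| - 3.\<close>

lemma laman_sparse_low_degree_vertex:
  fixes E :: "'v::finite set set"
  assumes "simple_graph E" "laman_sparse E" "E \<noteq> {}"
  obtains v where "1 \<le> card {e\<in>E. v \<in> e}" "card {e\<in>E. v \<in> e} \<le> 3"
proof (rule ccontr)
  assume "\<not> thesis"
  with that have low: "\<not> (1 \<le> card {e\<in>E. v \<in> e} \<and> card {e\<in>E. v \<in> e} \<le> 3)" for v
    by blast
  define W where "W = \<Union>E"
  obtain e0 where "e0 \<in> E" using assms(3) by blast
  then have "card e0 \<le> card W"
    unfolding W_def by (intro card_mono) auto
  moreover have "card e0 = 2" using assms(1) \<open>e0 \<in> E\<close> unfolding simple_graph_def by blast
  ultimately have "int (edge_count E W) \<le> 2 * int (card W) - 3"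
    using laman_sparse_edge_count[OF assms(2)] by simp
  moreover have "edge_count E W = card E"
  proof -
    have "{e\<in>E. e \<subseteq> W} = E" unfolding W_def by blast
    then show ?thesis unfolding edge_count_def by simp
  qed
  moreover have "4 * card W \<le> 2 * card E"
  proof -
    have "card {e\<in>E. v \<in> e} \<ge> 4" if vW: "v \<in> W" for v
    proof -
      obtain e where "e \<in> E" "v \<in> e" using vW unfolding W_def by blast
      then have "{e\<in>E. v \<in> e} \<noteq> {}" by blast
      then have "1 \<le> card {e\<in>E. v \<in> e}" by (simp add: Suc_le_eq card_gt_0_iff)
      then show ?thesis using low[of v] by linarith
    qed
    then have "(\<Sum>v\<in>W. 4) \<le> (\<Sum>v\<in>W. card {e\<in>E. v \<in> e})" by (intro sum_mono) auto
    also have "\<dots> = (\<Sum>e\<in>E. card (e \<inter> W))" by (rule sum_degree)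
    also have "\<dots> = (\<Sum>e\<in>E. 2)"
      using assms(1) by (intro sum.cong) (auto simp: simple_graph_def W_def Int_absorb2 Union_upper)
    finally show ?thesis by simp
  qed
  ultimately show False by linarith
qed

lemma tight_Un:
  fixes E :: "'v::finite set set"
  assumes "laman_sparse E" "tight E X" "tight E Y" "card (X \<inter> Y) \<ge> 2"
  shows "tight E (X \<union> Y)"
proof -
  let ?A = "{e\<in>E. e \<subseteq> X}" and ?B = "{e\<in>E. e \<subseteq> Y}"
  have AB: "?A \<inter> ?B = {e\<in>E. e \<subseteq> X \<inter> Y}" by auto
  have "card ?A + card ?B = card (?A \<union> ?B) + card (?A \<inter> ?B)"
    by (rule card_Un_Int) simp_all
  moreover have "card (?A \<union> ?B) \<le> edge_count E (X \<union> Y)"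
    unfolding edge_count_def by (rule card_mono) auto
  moreover have "int (card (?A \<inter> ?B)) \<le> 2 * int (card (X \<inter> Y)) - 3"
    unfolding AB using laman_sparse_edge_count[OF assms(1) _ assms(4)] by (simp add: edge_count_def)
  moreover have "card X + card Y = card (X \<union> Y) + card (X \<inter> Y)" by (rule card_Un_Int) simp_all
  moreover have "card (X \<union> Y) \<ge> 2"
    using assms(2) card_mono[of "X \<union> Y" X] unfolding tight_def by simp
  moreover from this have "int (edge_count E (X \<union> Y)) \<le> 2 * int (card (X \<union> Y)) - 3"
    using laman_sparse_edge_count[OF assms(1)] by simp
  ultimately show ?thesis
    using assms(2,3) unfolding tight_def edge_count_def by linarith
qed

lemma tight_of_not_insertable:
  fixes E :: "'v::finite set set"
  assumes "laman_sparse E" "x \<noteq> y" "{x, y} \<in> E \<or> \<not> laman_sparse (insert {x, y} E)"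
  obtains S where "{x, y} \<subseteq> S" "tight E S"
proof (cases "{x, y} \<in> E")
  case True
  have "{e\<in>E. e \<subseteq> {x, y}} \<noteq> {}" using True by blast
  then have "1 \<le> edge_count E {x, y}"
    unfolding edge_count_def by (simp add: Suc_le_eq card_gt_0_iff)
  then have "tight E {x, y}"
    using laman_sparse_edge_count[OF assms(1), of "{x, y}"] assms(2) unfolding tight_def by simp
  then show ?thesis using that by blast
next
  case False
  then obtain S :: "'v set" where S: "card S \<ge> 2" "int (edge_count (insert {x, y} E) S) > 2 * int (card S) - 3"
    using assms(3) not_laman_sparse by blast
  have "edge_count (insert {x, y} E) S \<le> edge_count E S + (if {x, y} \<subseteq> S then 1 else 0)"
  proof -
    have "{e\<in>insert {x, y} E. e \<subseteq> S}
        \<subseteq> (if {x, y} \<subseteq> S then insert {x, y} {e\<in>E. e \<subseteq> S} else {e\<in>E. e \<subseteq> S})"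
      by auto
    then have "edge_count (insert {x, y} E) S
        \<le> card (if {x, y} \<subseteq> S then insert {x, y} {e\<in>E. e \<subseteq> S} else {e\<in>E. e \<subseteq> S})"
      unfolding edge_count_def by (intro card_mono) auto
    also have "\<dots> \<le> edge_count E S + (if {x, y} \<subseteq> S then 1 else 0)"
      unfolding edge_count_def by (auto simp: card_insert_if)
    finally show ?thesis .
  qed
  moreover have "int (edge_count E S) \<le> 2 * int (card S) - 3"
    using laman_sparse_edge_count[OF assms(1)] S(1) by simp
  ultimately have "{x, y} \<subseteq> S" "tight E S"
    using S unfolding tight_def by (auto split: if_splits)
  then show ?thesis using that by blast
qed

locale laman_degree_three =
  fixes E :: "'v::finite set set" and v a b c :: 'v
  assumes simple: "simple_graph E" and sparse: "laman_sparse E"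
    and star: "{e\<in>E. v \<in> e} = {{v, a}, {v, b}, {v, c}}"
    and distinct: "a \<noteq> b" "b \<noteq> c" "a \<noteq> c" "v \<noteq> a" "v \<noteq> b" "v \<noteq> c"
begin

abbreviation F where "F \<equiv> delete_vertex E v"

lemmas sparse_F = laman_sparse_delete_vertex[OF sparse]
   and simple_F = simple_graph_delete_vertex[OF simple]

text \<open>Otherwise U together with v and its three edges would violate sparsity.\<close>

lemma edge_count_neighbourhood:
  assumes "{a, b, c} \<subseteq> U" "v \<notin> U"
  shows "int (edge_count F U) < 2 * int (card U) - 3"
proof -
  have "card {a, b, c} \<le> card U" by (rule card_mono) (use assms(1) in auto)
  then have "card U \<ge> 3" using distinct by simp
  have disjoint: "{e\<in>F. e \<subseteq> U} \<inter> {{v, a}, {v, b}, {v, c}} = {}"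
    by (auto simp: delete_vertex_def)
  have three: "card {{v, a}, {v, b}, {v, c}} = 3"
    using distinct by (auto simp: doubleton_eq_iff card_insert_if)
  have "edge_count F U + 3 = card ({e\<in>F. e \<subseteq> U} \<union> {{v, a}, {v, b}, {v, c}})"
    unfolding edge_count_def by (subst card_Un_disjoint) (use disjoint three in auto)
  also have "\<dots> \<le> edge_count E (insert v U)"
  proof -
    have "{e\<in>F. e \<subseteq> U} \<union> {{v, a}, {v, b}, {v, c}} \<subseteq> {e\<in>E. e \<subseteq> insert v U}"
      using star assms(1) unfolding delete_vertex_def by blast
    then show ?thesis unfolding edge_count_def by (rule card_mono[rotated]) simp
  qed
  finally have "edge_count F U + 3 \<le> edge_count E (insert v U)" .
  moreover have "int (edge_count E (insert v U)) \<le> 2 * int (card (insert v U)) - 3"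
    using laman_sparse_edge_count[OF sparse, of "insert v U"] \<open>card U \<ge> 3\<close> assms(2) by simp
  ultimately show ?thesis using assms(2) by (simp add: card_insert_if)
qed

lemma tight_avoiding_vertex:
  assumes "x \<in> {a, b, c}" "y \<in> {a, b, c}" "x \<noteq> y"
    and "{x, y} \<in> E \<or> \<not> laman_sparse (insert {x, y} F)"
  obtains S where "{x, y} \<subseteq> S" "v \<notin> S" "tight F S"
proof -
  have "x \<noteq> v" "y \<noteq> v" using assms(1,2) distinct by auto
  then have "{x, y} \<in> F \<or> \<not> laman_sparse (insert {x, y} F)"
    using assms(4) by (auto simp: delete_vertex_def)
  then obtain S where S: "{x, y} \<subseteq> S" "tight F S"
    using tight_of_not_insertable[OF sparse_F assms(3)] by blast
  have "v \<notin> S"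
  proof
    assume "v \<in> S"
    have "{e\<in>F. e \<subseteq> S - {v}} = {e\<in>F. e \<subseteq> S}" by (auto simp: delete_vertex_def)
    then have "edge_count F (S - {v}) = edge_count F S" by (simp add: edge_count_def)
    moreover have "card S = Suc (card (S - {v}))" using card_Suc_Diff1[of S v] \<open>v \<in> S\<close> by simp
    moreover have "int (edge_count F (S - {v})) \<le> 2 * int (card (S - {v})) - 3"
    proof -
      have "card {x, y} \<le> card (S - {v})"
        using S(1) \<open>x \<noteq> v\<close> \<open>y \<noteq> v\<close> by (intro card_mono) auto
      then show ?thesis using laman_sparse_edge_count[OF sparse_F] assms(3) by simp
    qed
    ultimately show False using S(2) unfolding tight_def by simp
  qed
  then show ?thesis using S that by blast
qed

lemma tight_avoiding_vertex_Int:
  assumes "tight F X" "tight F Y" "v \<notin> X" "v \<notin> Y" "{a, b, c} \<subseteq> X \<union> Y" "w \<in> X \<inter> Y"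
  shows "X \<inter> Y = {w}"
proof -
  have "\<not> tight F (X \<union> Y)"
    using edge_count_neighbourhood[of "X \<union> Y"] assms(3-5) unfolding tight_def by auto
  then have "card (X \<inter> Y) \<le> 1" using tight_Un[OF sparse_F assms(1,2)] by linarith
  then show ?thesis using assms(6) card_le_Suc0_iff_eq[of "X \<inter> Y"] by auto
qed

text \<open>Otherwise every pair of neighbours of v lies in a tight set of G - v avoiding v. These
  three sets meet pairwise in a single neighbour, so their union U has at least 2|U| - 3 edges,
  against edge_count_neighbourhood.\<close>

lemma insertable_pair:
  obtains x y z where "{x, y, z} = {a, b, c}" "x \<noteq> y" "x \<noteq> z" "y \<noteq> z" "{x, y} \<notin> E"
    "laman_sparse (insert {x, y} F)"
proof (rule ccontr)
  assume "\<not> thesis"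
  note insertable = that
  have blocked: "\<exists>S. {x, y} \<subseteq> S \<and> v \<notin> S \<and> tight F S"
    if "{x, y, z} = {a, b, c}" "x \<noteq> y" "x \<noteq> z" "y \<noteq> z" for x y z
  proof -
    have "{x, y} \<in> E \<or> \<not> laman_sparse (insert {x, y} F)"
      using \<open>\<not> thesis\<close> insertable that by blast
    moreover have "x \<in> {a, b, c}" "y \<in> {a, b, c}" by (simp_all add: that(1)[symmetric])
    ultimately show ?thesis using tight_avoiding_vertex that(2) by metis
  qed
  have permuted: "{b, c, a} = {a, b, c}" "{a, c, b} = {a, b, c}" by auto
  obtain X where X: "{a, b} \<subseteq> X" "v \<notin> X" "tight F X"
    using blocked[of a b c] distinct by blast
  obtain Y where Y: "{b, c} \<subseteq> Y" "v \<notin> Y" "tight F Y"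
    using blocked[OF permuted(1)] distinct by blast
  obtain Z where Z: "{a, c} \<subseteq> Z" "v \<notin> Z" "tight F Z"
    using blocked[OF permuted(2)] distinct by blast
  have XY: "X \<inter> Y = {b}" by (rule tight_avoiding_vertex_Int) (use X Y in auto)
  have YZ: "Y \<inter> Z = {c}" by (rule tight_avoiding_vertex_Int) (use Y Z in auto)
  have XZ: "X \<inter> Z = {a}" by (rule tight_avoiding_vertex_Int) (use X Z in auto)
  let ?A = "{e\<in>F. e \<subseteq> X}" and ?B = "{e\<in>F. e \<subseteq> Y}" and ?C = "{e\<in>F. e \<subseteq> Z}"
  have "?A \<inter> ?B = {e\<in>F. e \<subseteq> X \<inter> Y}" "?B \<inter> ?C = {e\<in>F. e \<subseteq> Y \<inter> Z}"
    "?A \<inter> ?C = {e\<in>F. e \<subseteq> X \<inter> Z}" by blast+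
  then have "?A \<inter> ?B = {}" "?B \<inter> ?C = {}" "?A \<inter> ?C = {}"
    unfolding XY YZ XZ simple_graph_no_edge_in_singleton[OF simple_F] by simp_all
  then have "card ?A + card ?B + card ?C = card (?A \<union> ?B \<union> ?C)"
    by (simp add: card_Un_disjoint Int_Un_distrib2)
  also have "\<dots> \<le> edge_count F (X \<union> Y \<union> Z)"
    unfolding edge_count_def by (rule card_mono) auto
  finally have "card ?A + card ?B + card ?C \<le> edge_count F (X \<union> Y \<union> Z)" .
  moreover have "card X + card Y = card (X \<union> Y) + 1"
    using card_Un_Int[of X Y] XY by simp
  moreover have "card (X \<union> Y) + card Z = card (X \<union> Y \<union> Z) + 2"
  proof -
    have "(X \<union> Y) \<inter> Z = {a, c}" using XZ YZ by auto
    then show ?thesis using card_Un_Int[of "X \<union> Y" Z] distinct by simp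
  qed
  moreover have "{a, b, c} \<subseteq> X \<union> Y \<union> Z" "v \<notin> X \<union> Y \<union> Z" using X Y Z by auto
  ultimately show False
    using edge_count_neighbourhood[of "X \<union> Y \<union> Z"] X(3) Y(3) Z(3)
    unfolding tight_def edge_count_def by linarith
qed

end

lemma laman_degree_three_neighbours:
  assumes "simple_graph E" "laman_sparse E" "neighbours E v = {a, b, c}" "a \<noteq> b" "a \<noteq> c" "b \<noteq> c"
  shows "laman_degree_three E v a b c"
proof
  show "{e\<in>E. v \<in> e} = {{v, a}, {v, b}, {v, c}}"
    unfolding incident_edges_neighbours[OF assms(1)] assms(3) by simp
  show "v \<noteq> a" "v \<noteq> b" "v \<noteq> c" using not_self_neighbour[OF assms(1), of v] assms(3) by auto
qed (use assms in auto)

section \<open>Henneberg extensions preserve independence\<close>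

definition det2 :: "real^2 \<Rightarrow> real^2 \<Rightarrow> real" where
  "det2 u w = u $ 1 * w $ 2 - u $ 2 * w $ 1"

lemma det2_nonzero_independent:
  assumes "det2 u w \<noteq> 0" "\<alpha> *\<^sub>R u + \<beta> *\<^sub>R w = 0"
  shows "\<alpha> = 0" "\<beta> = 0"
proof -
  have "\<alpha> * u $ k + \<beta> * w $ k = 0" for k
    using arg_cong[OF assms(2), of "\<lambda>x. x $ k"] by simp
  from this[of 1] this[of 2] have "\<alpha> * det2 u w = 0" "\<beta> * det2 u w = 0"
    unfolding det2_def by algebra+
  then show "\<alpha> = 0" "\<beta> = 0" using assms(1) by simp_all
qed

lemma generic_injective:
  fixes p :: "'v::finite \<Rightarrow> real^2"
  assumes "generic p" "a \<noteq> b"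
  shows "p a \<noteq> p b"
proof -
  define q :: "'v \<Rightarrow> real^2" where "q i = (if i = a then axis 1 1 else 0)" for i
  have "rat_polynomial (\<lambda>p::'v \<Rightarrow> real^2. p a $ 1 - p b $ 1)"
    by (intro rat_polynomial_diff rat_polynomial.coord)
  moreover have "q a $ 1 - q b $ 1 \<noteq> 0"
    using assms(2) by (simp add: q_def axis_def)
  ultimately have "p a $ 1 - p b $ 1 \<noteq> 0"
    using generic_rat_polynomial_nonzero[OF assms(1)] by blast
  then show ?thesis by auto
qed

lemma generic_not_collinear:
  fixes p :: "'v::finite \<Rightarrow> real^2"
  assumes "generic p" "a \<noteq> b" "a \<noteq> c" "b \<noteq> c"
  shows "det2 (p b - p a) (p c - p a) \<noteq> 0"
proof -
  define q :: "'v \<Rightarrow> real^2" where "q i = (if i = b then axis 1 1 else if i = c then axis 2 1 else 0)" for i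
  have "rat_polynomial (\<lambda>p::'v \<Rightarrow> real^2. det2 (p b - p a) (p c - p a))"
    unfolding det2_def vector_minus_component
    by (intro rat_polynomial_diff rat_polynomial.mult rat_polynomial.coord)
  moreover have "det2 (q b - q a) (q c - q a) \<noteq> 0"
    using assms(2-4) by (simp add: q_def axis_def det2_def)
  ultimately show ?thesis using generic_rat_polynomial_nonzero[OF assms(1)] by blast
qed

lemma independent_framework_add_vertex:
  fixes F :: "'v::finite set set"
  assumes "\<forall>e\<in>F. v \<notin> e" "v \<notin> N" "independent_framework F p"
    and "\<And>\<omega>. (\<Sum>w\<in>N. \<omega> w *\<^sub>R (p v - p w)) = 0 \<Longrightarrow> \<forall>w\<in>N. \<omega> w = 0"
  shows "independent_framework (F \<union> (\<lambda>w. {v, w}) ` N) p"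
  unfolding independent_framework_def
proof (intro allI impI)
  fix \<omega> assume stress: "\<forall>i. stress_force (F \<union> (\<lambda>w. {v, w}) ` N) p \<omega> i = 0"
  let ?T = "(\<lambda>w. {v, w}) ` N"
  have split: "stress_force (F \<union> ?T) p \<omega> i = stress_force F p \<omega> i + stress_force ?T p \<omega> i" for i
    using assms(1) by (intro stress_force_Un) auto
  have "(\<Sum>w\<in>N. \<omega> {v, w} *\<^sub>R (p v - p w)) = 0"
    using stress[rule_format, of v] split[of v] stress_force_avoiding[OF assms(1)]
      stress_force_star_centre[OF assms(2)] by simp
  then have T0: "\<forall>e\<in>?T. \<omega> e = 0" using assms(4)[of "\<lambda>w. \<omega> {v, w}"] by blast
  then have "stress_force ?T p \<omega> i = 0" for i
    unfolding stress_force_def by (intro sum.neutral) simp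
  then have "\<forall>i. stress_force F p \<omega> i = 0" using stress split by (metis add.right_neutral)
  then show "\<forall>e\<in>F \<union> ?T. \<omega> e = 0" using assms(3) T0 unfolding independent_framework_def by blast
qed

lemma generic_add_vertex_condition:
  fixes p :: "'v::finite \<Rightarrow> real^2"
  assumes "generic p" "v \<notin> N" "card N \<le> 2" "(\<Sum>w\<in>N. \<omega> w *\<^sub>R (p v - p w)) = 0"
  shows "\<forall>w\<in>N. \<omega> w = 0"
proof -
  consider "N = {}" | a where "N = {a}" | a b where "N = {a, b}" "a \<noteq> b"
  proof -
    have "card N = 0 \<or> card N = 1 \<or> card N = 2" using assms(3) by linarith
    then show thesis
    proof (elim disjE)
      assume "card N = 1" then show thesis using that(2) by (auto simp: card_1_singleton_iff)
    next
      assume "card N = 2" then show thesis using that(3) by (auto simp: card_2_iff)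
    qed (use that(1) in simp)
  qed
  then show ?thesis
  proof cases
    case (2 a)
    then show ?thesis using assms(2,4) generic_injective[OF assms(1), of v a] by auto
  next
    case (3 a b)
    have "det2 (p a - p v) (p b - p v) \<noteq> 0"
      using generic_not_collinear[OF assms(1)] 3 assms(2) by blast
    moreover have "(- \<omega> a) *\<^sub>R (p a - p v) + (- \<omega> b) *\<^sub>R (p b - p v) = 0"
    proof -
      have "(- \<omega> a) *\<^sub>R (p a - p v) + (- \<omega> b) *\<^sub>R (p b - p v) = (\<Sum>w\<in>N. \<omega> w *\<^sub>R (p v - p w))"
        using 3 by (simp add: scaleR_diff_right)
      then show ?thesis using assms(4) by simp
    qed
    ultimately have "- \<omega> a = 0" "- \<omega> b = 0" by (rule det2_nonzero_independent)+
    then show ?thesis using 3 by simp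
  qed simp
qed

lemma independent_framework_low_degree:
  fixes p :: "'v::finite \<Rightarrow> real^2"
  assumes "generic p" "simple_graph E" "card (neighbours E v) \<le> 2"
    and "independent_framework (delete_vertex E v) p"
  shows "independent_framework E p"
proof -
  have "independent_framework (delete_vertex E v \<union> (\<lambda>w. {v, w}) ` neighbours E v) p"
    using independent_framework_add_vertex[OF _ not_self_neighbour[OF assms(2)] assms(4)]
      generic_add_vertex_condition[OF assms(1) not_self_neighbour[OF assms(2)] assms(3)]
    by (simp add: delete_vertex_def)
  then show ?thesis using simple_graph_split_vertex[OF assms(2)] by simp
qed

lemma rigidity_entry_update_avoiding:
  assumes "v \<notin> e"
  shows "rigidity_entry (p(v := m)) e i = rigidity_entry p e i"
proof -
  have "(p(v := m)) w = p w" if "w \<in> e" for w using assms that by auto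
  then show ?thesis unfolding rigidity_entry_def by (auto intro!: sum.cong)
qed

lemma stress_force_update_avoiding:
  "\<forall>e\<in>F. v \<notin> e \<Longrightarrow> stress_force F (p(v := m)) \<omega> i = stress_force F p \<omega> i"
  unfolding stress_force_def by (simp add: rigidity_entry_update_avoiding)

lemma rigidity_entry_midpoint:
  fixes p :: "'v \<Rightarrow> real^2"
  assumes "v \<noteq> x" "v \<noteq> y" "x \<noteq> y"
  defines "q \<equiv> p(v := midpoint (p x) (p y))"
  shows "rigidity_entry q {v, x} i + rigidity_entry q {v, y} i = (1/2) *\<^sub>R rigidity_entry p {x, y} i"
proof -
  have q: "q v = midpoint (p x) (p y)" "q x = p x" "q y = p y"
    using assms by simp_all
  consider "i = v" | "i = x" | "i = y" | "i \<notin> {v, x, y}" by blast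
  then show ?thesis
  proof cases
    case 1
    have "(midpoint (p x) (p y) - p x) + (midpoint (p x) (p y) - p y) = 0"
      by (simp add: midpoint_def vec_eq_iff field_simps)
    then show ?thesis
      using 1 assms(1-3) q by (simp add: rigidity_entry_edge rigidity_entry_outside)
  next
    case 2
    have "p x - midpoint (p x) (p y) = (1/2) *\<^sub>R (p x - p y)"
      by (simp add: midpoint_def vec_eq_iff field_simps)
    then show ?thesis
      using 2 assms(1-3) q by (simp add: rigidity_entry_edge rigidity_entry_edge' rigidity_entry_outside)
  next
    case 3
    have "p y - midpoint (p x) (p y) = (1/2) *\<^sub>R (p y - p x)"
      by (simp add: midpoint_def vec_eq_iff field_simps)
    then show ?thesis
      using 3 assms(1-3) q by (simp add: rigidity_entry_edge' rigidity_entry_outside)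
  qed (simp add: rigidity_entry_outside)
qed

lemma midpoint_forces:
  fixes x y z :: "real^2"
  assumes "det2 (y - x) (z - x) \<noteq> 0"
    and "\<alpha> *\<^sub>R (midpoint x y - x) + \<beta> *\<^sub>R (midpoint x y - y) + \<gamma> *\<^sub>R (midpoint x y - z) = 0"
  shows "\<gamma> = 0" "\<alpha> = \<beta>"
proof -
  have "((\<alpha> - \<beta> + \<gamma>) / 2) *\<^sub>R (y - x) + (- \<gamma>) *\<^sub>R (z - x)
      = \<alpha> *\<^sub>R (midpoint x y - x) + \<beta> *\<^sub>R (midpoint x y - y) + \<gamma> *\<^sub>R (midpoint x y - z)"
    by (simp add: vec_eq_iff midpoint_def field_simps)
  then have "((\<alpha> - \<beta> + \<gamma>) / 2) *\<^sub>R (y - x) + (- \<gamma>) *\<^sub>R (z - x) = 0"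
    using assms(2) by simp
  from det2_nonzero_independent[OF assms(1) this] show "\<gamma> = 0" "\<alpha> = \<beta>" by simp_all
qed

text \<open>Placing v at the midpoint of xy, a stress of the new framework must vanish on vz, be equal on
  vx and vy, and then becomes a stress of the old one with that common value (halved) on xy.\<close>

lemma independent_framework_edge_split:
  fixes F :: "'v::finite set set"
  assumes F: "\<forall>e\<in>F. v \<notin> e" "{x, y} \<notin> F"
    and distinct: "v \<noteq> x" "v \<noteq> y" "v \<noteq> z" "x \<noteq> y" "x \<noteq> z" "y \<noteq> z"
    and independent: "independent_framework (insert {x, y} F) p"
    and not_collinear: "det2 (p y - p x) (p z - p x) \<noteq> 0"
  shows "independent_framework (F \<union> (\<lambda>w. {v, w}) ` {x, y, z}) (p(v := midpoint (p x) (p y)))"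
  unfolding independent_framework_def
proof (intro allI impI)
  let ?m = "midpoint (p x) (p y)"
  let ?q = "p(v := ?m)" and ?T = "(\<lambda>w. {v, w}) ` {x, y, z}"
  fix \<omega> assume total: "\<forall>i. stress_force (F \<union> ?T) ?q \<omega> i = 0"
  have "F \<inter> ?T = {}" using F(1) by blast
  then have stress: "stress_force F p \<omega> i + stress_force ?T ?q \<omega> i = 0" for i
    using total stress_force_Un[of F ?T ?q \<omega> i] stress_force_update_avoiding[OF F(1)] by simp
  have star: "stress_force ?T ?q \<omega> i = \<omega> {v, x} *\<^sub>R rigidity_entry ?q {v, x} i
      + \<omega> {v, y} *\<^sub>R rigidity_entry ?q {v, y} i + \<omega> {v, z} *\<^sub>R rigidity_entry ?q {v, z} i" for i
    unfolding stress_force_star using distinct by (simp add: add.assoc)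
  have "\<omega> {v, x} *\<^sub>R (?m - p x) + \<omega> {v, y} *\<^sub>R (?m - p y) + \<omega> {v, z} *\<^sub>R (?m - p z) = 0"
    using stress[of v] star[of v] stress_force_avoiding[OF F(1)] distinct
    by (simp add: rigidity_entry_edge)
  then have vz: "\<omega> {v, z} = 0" and vxy: "\<omega> {v, x} = \<omega> {v, y}"
    using midpoint_forces[OF not_collinear] by blast+
  define \<omega>' where "\<omega>' = fun_upd \<omega> {x, y} (\<omega> {v, x} / 2)"
  have "stress_force (insert {x, y} F) p \<omega>' i = 0" for i
  proof -
    have "stress_force ?T ?q \<omega> i = (\<omega> {v, x} / 2) *\<^sub>R rigidity_entry p {x, y} i"
      using star[of i] rigidity_entry_midpoint[OF distinct(1,2,4), of p i] vz vxy
      by (simp add: scaleR_add_right[symmetric])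
    moreover have "stress_force (insert {x, y} F) p \<omega>' i
        = \<omega>' {x, y} *\<^sub>R rigidity_entry p {x, y} i + stress_force F p \<omega> i"
      unfolding stress_force_def using F(2) by (simp add: \<omega>'_def) (auto intro!: sum.cong)
    ultimately show ?thesis using stress[of i] by (simp add: \<omega>'_def add.commute)
  qed
  then have "\<forall>e\<in>insert {x, y} F. \<omega>' e = 0"
    using independent unfolding independent_framework_def by blast
  then have "\<omega> {v, x} = 0" "\<forall>e\<in>F. \<omega> e = 0"
    using F(2) by (auto simp: \<omega>'_def split: if_splits)
  then show "\<forall>e\<in>F \<union> ?T. \<omega> e = 0" using vz vxy by auto
qed

context laman_degree_three
begin

lemma split_at_vertex: "E = F \<union> (\<lambda>w. {v, w}) ` {a, b, c}"
proof -
  have "E = F \<union> {e\<in>E. v \<in> e}" by (auto simp: delete_vertex_def)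
  then show ?thesis unfolding star by simp
qed

lemma independent_framework_from_reduction:
  fixes p :: "'v \<Rightarrow> real^2"
  assumes "generic p"
    and reduced: "\<And>x y. x \<noteq> y \<Longrightarrow> laman_sparse (insert {x, y} F) \<Longrightarrow> independent_framework (insert {x, y} F) p"
  shows "independent_framework E p"
proof -
  obtain x y z where xyz: "{x, y, z} = {a, b, c}" "x \<noteq> y" "x \<noteq> z" "y \<noteq> z" "{x, y} \<notin> E"
    "laman_sparse (insert {x, y} F)"
    by (rule insertable_pair)
  have "v \<notin> {x, y, z}" unfolding xyz(1) using distinct by simp
  then have "v \<noteq> x" "v \<noteq> y" "v \<noteq> z" by auto
  moreover have "{x, y} \<notin> F" using xyz(5) by (simp add: delete_vertex_def)
  moreover have "\<forall>e\<in>F. v \<notin> e" by (simp add: delete_vertex_def)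
  ultimately have "independent_framework (F \<union> (\<lambda>w. {v, w}) ` {x, y, z}) (p(v := midpoint (p x) (p y)))"
    using independent_framework_edge_split reduced[OF xyz(2,6)]
      generic_not_collinear[OF assms(1) xyz(2,3,4)] xyz(2-4) by blast
  then show ?thesis
    using independent_framework_generic[OF assms(1)] split_at_vertex xyz(1) by metis
qed

end

theorem laman_sparse_independent:
  fixes E :: "'v::finite set set" and p :: "'v \<Rightarrow> real^2"
  assumes "generic p" "simple_graph E" "laman_sparse E"
  shows "independent_framework E p"
  using assms(2,3)
proof (induction "card E" arbitrary: E rule: less_induct)
  case less
  show ?case
  proof (cases "E = {}")
    case True
    then show ?thesis by (simp add: independent_framework_def)
  next
    case False
    obtain v where degree: "1 \<le> card {e\<in>E. v \<in> e}" "card {e\<in>E. v \<in> e} \<le> 3"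
      using laman_sparse_low_degree_vertex[OF less.prems False] by blast
    let ?F = "delete_vertex E v" and ?N = "neighbours E v"
    have card_E: "card E = card ?F + card ?N" by (rule card_split_vertex[OF less.prems(1)])
    have N: "1 \<le> card ?N" "card ?N \<le> 3"
      using degree card_neighbours[OF less.prems(1), of v] by simp_all
    have F: "independent_framework ?F p"
      using less.hyps[of ?F] card_E N simple_graph_delete_vertex[OF less.prems(1)]
        laman_sparse_delete_vertex[OF less.prems(2)] by simp
    consider "card ?N \<le> 2" | "card ?N = 3" using N by linarith
    then show ?thesis
    proof cases
      case 1
      then show ?thesis by (rule independent_framework_low_degree[OF assms(1) less.prems(1) _ F])
    next
      case 2
      then obtain a b c where abc: "?N = {a, b, c}" "a \<noteq> b" "a \<noteq> c" "b \<noteq> c"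
        by (auto simp: card_3_iff)
      interpret laman_degree_three E v a b c
        by (rule laman_degree_three_neighbours[OF less.prems abc])
      show ?thesis
      proof (rule independent_framework_from_reduction[OF assms(1)])
        fix x y assume "x \<noteq> y" "laman_sparse (insert {x, y} ?F)"
        moreover have "card (insert {x, y} ?F) < card E" using card_E 2 by (simp add: card_insert_if)
        moreover have "simple_graph (insert {x, y} ?F)"
          using \<open>x \<noteq> y\<close> simple_graph_delete_vertex[OF less.prems(1)] by (simp add: simple_graph_def)
        ultimately show "independent_framework (insert {x, y} ?F) p" using less.hyps by blast
      qed
    qed
  qed
qed

section \<open>Matrices positive definite on the complement of e\<close>

lemma quadratic_form_shift:
  fixes Y :: "real^'n::finite^'n"
  assumes "transpose Y = Y" "Y *v 1 = 0"
  shows "(x - t *\<^sub>R 1) \<bullet> (Y *v (x - t *\<^sub>R 1)) = x \<bullet> (Y *v x)"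
proof -
  have Y1: "Y *v (x - t *\<^sub>R 1) = Y *v x"
    by (simp add: matrix_vector_mult_diff_distrib matrix_scaleR_vector_ac assms(2)
        scaleR_matrix_vector_assoc[symmetric])
  have "1 \<bullet> (Y *v x) = (1 v* Y) \<bullet> x" by (simp add: dot_lmul_matrix)
  also have "1 v* Y = Y *v 1" by (metis assms(1) vector_transpose_matrix)
  finally have "1 \<bullet> (Y *v x) = 0" using assms(2) by simp
  then show ?thesis unfolding Y1 by (simp add: inner_diff_left)
qed

lemma inner_one_centred:
  fixes x :: "real^'n::finite"
  shows "1 \<bullet> (x - ((1 \<bullet> x) / CARD('n)) *\<^sub>R 1) = 0"
  by (simp add: inner_diff_right inner_vec_def sum_subtractf)

locale centred_coercive =
  fixes X :: "real^'n::finite^'n" and s :: real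
  assumes symmetric: "transpose X = X" and kernel: "X *v 1 = 0" and s_pos: "s > 0"
    and coercive: "\<And>x. 1 \<bullet> x = 0 \<Longrightarrow> s * (x \<bullet> x) \<le> x \<bullet> (X *v x)"
begin

lemma psd_near:
  fixes Y :: "real^'n^'n"
  assumes Y: "transpose Y = Y" "Y *v 1 = 0" and close: "real CARD('n) ^ 2 * norm (Y - X) \<le> s"
  shows "psd Y"
  unfolding psd_def
proof (intro conjI allI)
  fix x :: "real^'n"
  define x0 where "x0 = x - ((1 \<bullet> x) / CARD('n)) *\<^sub>R 1"
  have x0: "1 \<bullet> x0 = 0" unfolding x0_def by (rule inner_one_centred)
  have "\<bar>x0 \<bullet> ((Y - X) *v x0)\<bar> \<le> norm x0 * norm ((Y - X) *v x0)" by (rule Cauchy_Schwarz_ineq2)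
  also have "\<dots> \<le> norm x0 * (onorm ((*v) (Y - X)) * norm x0)"
    by (intro mult_left_mono onorm[OF matrix_vector_mul_bounded_linear]) simp
  also have "\<dots> \<le> norm x0 * (s * norm x0)"
  proof -
    have "\<bar>(Y - X) $ i $ j\<bar> \<le> norm (Y - X)" for i j
      using component_le_norm_cart[of "(Y - X) $ i" j] Finite_Cartesian_Product.norm_nth_le[of "Y - X" i] by linarith
    then have "onorm ((*v) (Y - X)) \<le> s"
      using onorm_le_matrix_component[of "Y - X" "norm (Y - X)"] close
      by (simp add: power2_eq_square)
    then show ?thesis by (simp add: mult_left_mono mult_right_mono)
  qed
  finally have "\<bar>x0 \<bullet> ((Y - X) *v x0)\<bar> \<le> s * (x0 \<bullet> x0)"
    by (simp add: dot_square_norm power2_eq_square mult_ac)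
  moreover have "x0 \<bullet> (Y *v x0) = x0 \<bullet> (X *v x0) + x0 \<bullet> ((Y - X) *v x0)"
    by (simp add: matrix_vector_mult_diff_rdistrib inner_diff_right)
  moreover have "x \<bullet> (Y *v x) = x0 \<bullet> (Y *v x0)"
    unfolding x0_def by (rule quadratic_form_shift[OF Y, symmetric])
  ultimately show "0 \<le> x \<bullet> (Y *v x)" using coercive[OF x0] by linarith
qed (rule Y(1))

lemma in_centred_face: "X \<in> centred_face"
  unfolding centred_face_def using psd_near[OF symmetric kernel] kernel s_pos by simp

lemma in_rel_interior: "X \<in> rel_interior centred_face"
proof -
  define L where "L = {Y::real^'n^'n. transpose Y = Y \<and> Y *v 1 = 0}"
  have "subspace L"
    unfolding subspace_def L_def
    by (auto simp: transpose_def vec_eq_iff matrix_vector_mult_add_rdistrib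
        scaleR_matrix_vector_assoc[symmetric])
  then have "affine hull centred_face \<subseteq> L"
    by (intro hull_minimal subspace_imp_affine) (auto simp: L_def centred_face_def psd_def)
  moreover define \<delta> where "\<delta> = s / real CARD('n) ^ 2"
  have "\<delta> > 0" using s_pos by (simp add: \<delta>_def)
  moreover have "ball X \<delta> \<inter> L \<subseteq> centred_face"
  proof
    fix Y assume Y: "Y \<in> ball X \<delta> \<inter> L"
    then have "real CARD('n) ^ 2 * norm (Y - X) \<le> s"
      by (simp add: \<delta>_def dist_norm norm_minus_commute field_simps)
    then show "Y \<in> centred_face" using Y psd_near unfolding L_def centred_face_def by simp
  qed
  ultimately show ?thesis using in_centred_face unfolding mem_rel_interior_ball by blast
qed

lemma rank_eq: "rank X = CARD('n) - 1"
proof -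
  define H where "H = {y::real^'n. 1 \<bullet> y = 0}"
  have "subspace H" unfolding H_def by (rule subspace_hyperplane)
  have range: "range ((*v) X) \<subseteq> H"
  proof
    fix y assume "y \<in> range ((*v) X)"
    then obtain x where y: "y = X *v x" by blast
    have "1 \<bullet> (X *v x) = (1 v* X) \<bullet> x" by (simp add: dot_lmul_matrix)
    also have "1 v* X = X *v 1" by (metis symmetric vector_transpose_matrix)
    finally show "y \<in> H" using kernel y by (simp add: H_def)
  qed
  have "inj_on ((*v) X) H"
  proof (rule inj_onI)
    fix x y assume "x \<in> H" "y \<in> H" "X *v x = X *v y"
    then have "1 \<bullet> (x - y) = 0" "X *v (x - y) = 0"
      by (simp_all add: H_def inner_diff_right matrix_vector_mult_diff_distrib)
    then have "s * ((x - y) \<bullet> (x - y)) \<le> 0" using coercive by fastforce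
    then have "(x - y) \<bullet> (x - y) = 0"
      using s_pos inner_ge_zero[of "x - y"] by (simp add: mult_le_0_iff)
    then show "x = y" by simp
  qed
  moreover have "span H = H" using \<open>subspace H\<close> by (rule span_eq_iff[THEN iffD2])
  ultimately have "dim ((*v) X ` H) = dim H"
    using dim_image_eq[OF matrix_vector_mul_linear] by metis
  moreover have "dim ((*v) X ` H) \<le> dim (range ((*v) X))" by (rule dim_subset) auto
  moreover have "dim (range ((*v) X)) \<le> dim H" by (rule dim_subset[OF range])
  ultimately have "dim (range ((*v) X)) = dim H" by linarith
  then show ?thesis
    using dim_hyperplane[of "1::real^'n"] unfolding H_def rank_dim_range by simp
qed

end

section \<open>A rank n - 1 solution of the completion problem\<close>

definition gram_matrix :: "('n::finite \<Rightarrow> 'a::real_inner) \<Rightarrow> real^'n^'n" where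
  "gram_matrix R = (\<chi> i j. R i \<bullet> R j)"

definition centering_matrix :: "real^'n::finite^'n" where
  "centering_matrix = (\<chi> i j. (if i = j then 1 else 0) - 1 / CARD('n))"

definition centred :: "('n::finite \<Rightarrow> 'a::real_vector) \<Rightarrow> 'n \<Rightarrow> 'a" where
  "centred R i = R i - (1 / CARD('n)) *\<^sub>R sum R UNIV"

lemma sum_centred: "sum (centred R) UNIV = 0"
  by (simp add: centred_def sum_subtractf sum_constant_scaleR)

lemma centred_diff: "centred R i - centred R j = R i - R j"
  by (simp add: centred_def)

lemma Kmap_add: "Kmap (A + B) i j = Kmap A i j + Kmap B i j"
  by (simp add: Kmap_def)

lemma Kmap_diff: "Kmap (A - B) i j = Kmap A i j - Kmap B i j"
  by (simp add: Kmap_def)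

lemma Kmap_scaleR: "Kmap (c *\<^sub>R A) i j = c * Kmap A i j"
  by (simp add: Kmap_def algebra_simps)

lemma Kmap_gram_matrix: "Kmap (gram_matrix R) i j = norm (R i - R j)^2"
  by (simp add: Kmap_def gram_matrix_def power2_norm_eq_inner inner_diff_left inner_diff_right
      inner_commute)

lemma Kmap_centering_matrix: "i \<noteq> j \<Longrightarrow> Kmap centering_matrix i j = 2"
  by (simp add: Kmap_def centering_matrix_def)

lemma gram_matrix_mult_one: "sum R UNIV = 0 \<Longrightarrow> gram_matrix R *v 1 = 0"
  by (simp add: gram_matrix_def matrix_vector_mult_def vec_eq_iff inner_sum_right[symmetric])

lemma centering_matrix_mult: "centering_matrix *v x = x - ((1 \<bullet> x) / CARD('n)) *\<^sub>R (1 :: real^'n::finite)"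
proof -
  have "(centering_matrix *v x) $ i = (\<Sum>j\<in>UNIV. (if i = j then x $ j else 0) - x $ j / CARD('n))" for i
    unfolding centering_matrix_def matrix_vector_mult_def vec_lambda_beta
    by (intro sum.cong) (simp_all add: algebra_simps)
  then show ?thesis by (simp add: vec_eq_iff sum_subtractf sum_divide_distrib inner_vec_def)
qed

lemma centering_matrix_mult_one: "centering_matrix *v (1 :: real^'n::finite) = 0"
  by (simp add: centering_matrix_mult inner_vec_def)

lemma gram_matrix_quadratic_form:
  "x \<bullet> (gram_matrix R *v x) = norm (\<Sum>i\<in>UNIV. x $ i *\<^sub>R R i)^2"
  by (simp add: gram_matrix_def matrix_vector_mult_def inner_vec_def power2_norm_eq_inner
      inner_sum_left inner_sum_right sum_distrib_left mult_ac inner_commute)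

lemma centering_matrix_quadratic_form:
  "1 \<bullet> x = 0 \<Longrightarrow> x \<bullet> (centering_matrix *v x) = x \<bullet> (x :: real^'n::finite)"
  by (simp add: centering_matrix_mult)

lemma norm_sum_scaleR_squared_le:
  fixes R :: "'n::finite \<Rightarrow> 'a::real_normed_vector"
  shows "norm (\<Sum>i\<in>UNIV. x $ i *\<^sub>R R i)^2 \<le> (x \<bullet> x) * (\<Sum>i\<in>UNIV. norm (R i)^2)"
proof -
  have "norm (\<Sum>i\<in>UNIV. x $ i *\<^sub>R R i) \<le> (\<Sum>i\<in>UNIV. \<bar>x $ i\<bar> * \<bar>norm (R i)\<bar>)"
    by (rule sum_norm_le) simp
  also have "\<dots> \<le> L2_set (($) x) UNIV * L2_set (\<lambda>i. norm (R i)) UNIV"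
    by (rule L2_set_mult_ineq)
  finally have "norm (\<Sum>i\<in>UNIV. x $ i *\<^sub>R R i)^2 \<le> (L2_set (($) x) UNIV * L2_set (\<lambda>i. norm (R i)) UNIV)^2"
    by (simp add: power_mono)
  also have "\<dots> = (x \<bullet> x) * (\<Sum>i\<in>UNIV. norm (R i)^2)"
    unfolding power_mult_distrib L2_set_def inner_vec_def
    by (simp add: sum_nonneg power2_eq_square)
  finally show ?thesis .
qed

text \<open>On
  the complement of e the second-order correction t^2 Gram(Q) is dominated by the term t |x|^2
  contributed by the centering matrix.\<close>

lemma gram_perturbation_centred_coercive:
  fixes P Q :: "'n::finite \<Rightarrow> 'a::real_inner"
  assumes "sum P UNIV = 0" "sum Q UNIV = 0" "t > 0" "t * (\<Sum>i\<in>UNIV. norm (Q i)^2) \<le> 1/2"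
  shows "centred_coercive
    (gram_matrix (\<lambda>i. P i + t *\<^sub>R Q i) - t^2 *\<^sub>R gram_matrix Q + t *\<^sub>R centering_matrix) (t / 2)"
proof
  let ?X = "gram_matrix (\<lambda>i. P i + t *\<^sub>R Q i) - t^2 *\<^sub>R gram_matrix Q + t *\<^sub>R centering_matrix"
  show "transpose ?X = ?X"
    by (simp add: transpose_def vec_eq_iff gram_matrix_def centering_matrix_def inner_commute)
  have "sum (\<lambda>i. P i + t *\<^sub>R Q i) UNIV = 0" using assms(1,2) by (simp add: sum.distrib scaleR_sum_right[symmetric])
  then show "?X *v 1 = 0"
    using assms(2) by (simp add: matrix_vector_mult_diff_rdistrib matrix_vector_mult_add_rdistrib
        scaleR_matrix_vector_assoc[symmetric] gram_matrix_mult_one centering_matrix_mult_one)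
  show "t / 2 > 0" using assms(3) by simp
  fix x :: "real^'n" assume x: "1 \<bullet> x = 0"
  have "x \<bullet> (?X *v x) = norm (\<Sum>i\<in>UNIV. x $ i *\<^sub>R (P i + t *\<^sub>R Q i))^2
      - t^2 * norm (\<Sum>i\<in>UNIV. x $ i *\<^sub>R Q i)^2 + t * (x \<bullet> x)"
    by (simp add: matrix_vector_mult_diff_rdistrib matrix_vector_mult_add_rdistrib inner_diff_right
        inner_add_right scaleR_matrix_vector_assoc[symmetric] gram_matrix_quadratic_form
        centering_matrix_quadratic_form[OF x])
  moreover have "t^2 * norm (\<Sum>i\<in>UNIV. x $ i *\<^sub>R Q i)^2 \<le> t / 2 * (x \<bullet> x)"
  proof -
    have "t^2 * norm (\<Sum>i\<in>UNIV. x $ i *\<^sub>R Q i)^2 \<le> t^2 * ((x \<bullet> x) * (\<Sum>i\<in>UNIV. norm (Q i)^2))"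
      by (intro mult_left_mono norm_sum_scaleR_squared_le) simp
    also have "\<dots> = t * (x \<bullet> x) * (t * (\<Sum>i\<in>UNIV. norm (Q i)^2))" by (simp add: power2_eq_square)
    also have "\<dots> \<le> t * (x \<bullet> x) * (1/2)"
      using assms(3,4) by (intro mult_left_mono) simp_all
    finally show ?thesis by simp
  qed
  moreover have "0 \<le> norm (\<Sum>i\<in>UNIV. x $ i *\<^sub>R (P i + t *\<^sub>R Q i))^2" by simp
  ultimately show "t / 2 * (x \<bullet> x) \<le> x \<bullet> (?X *v x)" by linarith
qed

lemma Kmap_gram_perturbation:
  fixes P Q :: "'n::finite \<Rightarrow> 'a::real_inner"
  assumes "i \<noteq> j"
  shows "Kmap (gram_matrix (\<lambda>i. P i + t *\<^sub>R Q i) - t^2 *\<^sub>R gram_matrix Q + t *\<^sub>R centering_matrix) i j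
    = norm (P i - P j)^2 + 2 * t * ((P i - P j) \<bullet> (Q i - Q j)) + 2 * t"
proof -
  have "P i + t *\<^sub>R Q i - (P j + t *\<^sub>R Q j) = (P i - P j) + t *\<^sub>R (Q i - Q j)"
    by (simp add: algebra_simps)
  then have "norm (P i + t *\<^sub>R Q i - (P j + t *\<^sub>R Q j))^2
      = norm (P i - P j)^2 + 2 * t * ((P i - P j) \<bullet> (Q i - Q j)) + t^2 * norm (Q i - Q j)^2"
    by (simp add: power2_norm_eq_inner inner_add_left inner_add_right inner_commute)
      (simp add: power2_eq_square algebra_simps inner_commute)
  then show ?thesis
    using assms by (simp add: Kmap_add Kmap_diff Kmap_scaleR Kmap_gram_matrix Kmap_centering_matrix)
qed

lemma independent_framework_centred_realization:
  fixes E :: "'v::finite set set" and p :: "'v \<Rightarrow> real^2"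
  assumes "simple_graph E" "independent_framework E p"
  obtains X s where "X \<in> edm_feasible E p" "centred_coercive X s"
proof -
  obtain h where h: "\<And>e. e \<in> E \<Longrightarrow> (\<Sum>v\<in>UNIV. rigidity_entry p e v \<bullet> h v) = -1"
    by (rule independent_framework_solvable[OF assms(2), of "\<lambda>_. -1"]) blast
  define K where "K = (\<Sum>i\<in>UNIV. norm (centred h i)^2)"
  define t where "t = 1 / (2 * (K + 1))"
  define X where "X = gram_matrix (\<lambda>i. centred p i + t *\<^sub>R centred h i)
    - t^2 *\<^sub>R gram_matrix (centred h) + t *\<^sub>R centering_matrix"
  have "K \<ge> 0" unfolding K_def by (simp add: sum_nonneg)
  then have "t > 0" "t * K \<le> 1/2" by (simp_all add: t_def field_simps)
  then interpret centred_coercive X "t / 2"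
    unfolding X_def K_def by (intro gram_perturbation_centred_coercive sum_centred)
  have "X \<in> edm_feasible E p"
    unfolding edm_feasible_def
  proof (intro CollectI conjI allI impI in_centred_face)
    fix i j assume ij: "{i, j} \<in> E"
    have "i \<noteq> j" by (rule simple_graph_edge_distinct[OF assms(1) ij])
    moreover from this have "(p i - p j) \<bullet> (h i - h j) = -1"
      using h[OF ij] rigidity_entry_inner[of i j p h] by simp
    ultimately show "Kmap X i j = (norm (p i - p j))^2"
      unfolding X_def by (simp add: Kmap_gram_perturbation centred_diff)
  qed
  then show ?thesis using that centred_coercive_axioms by blast
qed

theorem mainTheorem9:
  fixes E :: "'v::finite set set" and p :: "'v \<Rightarrow> real^2"
  assumes "simple_graph E"
    and "laman_sparse E"
    and "generic p"
  shows "sing_degree_zero E p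
    \<and> \<not> (\<exists>\<omega>. equilibrium_stress E p \<omega> \<and> psd (stress_matrix E \<omega>) \<and> stress_matrix E \<omega> \<noteq> 0)
    \<and> (\<exists>X. X \<in> edm_feasible E p \<and> rank X = CARD('v) - 1)"
proof -
  have independent: "independent_framework E p"
    by (rule laman_sparse_independent[OF assms(3,1,2)])
  obtain X s where X: "X \<in> edm_feasible E p" "centred_coercive X s"
    using independent_framework_centred_realization[OF assms(1) independent] by blast
  have "sing_degree_zero E p"
    unfolding sing_degree_zero_def using X centred_coercive.in_rel_interior by blast
  moreover have "rank X = CARD('v) - 1" by (rule centred_coercive.rank_eq[OF X(2)])
  ultimately show ?thesis
    using X(1) independent_framework_no_stress[OF assms(1) independent] by blast
qed

end
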